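(* $\lim_{k\to\infty,\ k\text{ odd}}p_k^\star=\frac12$.
   Context: For odd $k\ge3$, $p,x\in[0,1]$: $F_{p,k}(x)=\Pr[\mathrm{Bin}(k,(1-p)x)\ge(k+1)/2]$. $p_k^\star\in[1/9,1/2)$ is the (unique) value such that for $0\le p<p_k^\star$ the equation $F_{p,k}(x)=x$ on $[0,1]$ has exactly three solutions, for $p=p_k^\star$ exactly two, and for $p>p_k^\star$ its only solution is $0$. *)

theory Defs
  imports Complex_Main
begin

text \<open>F_{p,k}(x) = Pr[Bin(k,(1-p)x) \<ge> (k+1)/2], written out as the binomial tail sum.
  For odd k, (k+1)/2 = Suc k div 2 exactly.\<close>
definition F :: "real \<Rightarrow> nat \<Rightarrow> real \<Rightarrow> real" where
  "F p k x = (\<Sum>i\<in>{i. Suc k div 2 \<le> i \<and> i \<le> k}.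
       real (k choose i) * ((1 - p) * x) ^ i * (1 - (1 - p) * x) ^ (k - i))"

definition fixpts :: "real \<Rightarrow> nat \<Rightarrow> real set" where
  "fixpts p k = {x. 0 \<le> x \<and> x \<le> 1 \<and> F p k x = x}"

definition pstar :: "nat \<Rightarrow> real" where
  "pstar k = (THE p. 1/9 \<le> p \<and> p < 1/2
     \<and> (\<forall>q. 0 \<le> q \<and> q < p \<longrightarrow> finite (fixpts q k) \<and> card (fixpts q k) = 3)
     \<and> finite (fixpts p k) \<and> card (fixpts p k) = 2
     \<and> (\<forall>q. p < q \<and> q \<le> 1 \<longrightarrow> fixpts q k = {0}))"

end

theory Submission
  imports Defs "HOL-Analysis.Weierstrass_Theorems"
begin

(* Let G(y) be the probability that at least m + 1 of 2m + 1 independent coins of bias y show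
   heads, so that F_{p,2m+1}(x) = G((1 - p) x). Besides 0, the fixed points correspond via
   y = (1 - p) x to the solutions in (0,1] of y / G(y) = 1 - p. The derivative of y / G(y) has the
   sign of G(y) - y G'(y), whose own derivative is a positive multiple of 2y - 1. Hence y / G(y)
   decreases from values above 1 to a minimum r_m and then increases to 1 at y = 1, so there are
   three, two or one fixed points according as 1 - p is above, equal to or below r_m, that is
   p*_{2m+1} = 1 - r_m. Finally r_m tends to 1/2: the minimiser lies beyond 1/2 and y / G(y) >= y,
   while for fixed y > 1/2 the lower binomial tail is at most 2 (4y(1-y))^m, so y / G(y) tends to y. *)

lemma has_real_derivative_Bernstein_Suc:
  "(Bernstein (Suc n) (Suc k) has_real_derivative
     real (Suc n) * (Bernstein n k y - Bernstein n (Suc k) y)) (at y)"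
proof -
  define c where "c = real (Suc n choose Suc k)"
  have pow: "((\<lambda>y. y ^ Suc k) has_real_derivative real (Suc k) * y ^ k) (at y)"
    using DERIV_pow[of "Suc k" y] by simp
  have comp: "((\<lambda>y. (1 - y) ^ (n - k)) has_real_derivative
      - (real (n - k) * (1 - y) ^ (n - Suc k))) (at y)"
    using DERIV_power[OF DERIV_diff[OF DERIV_const[of 1] DERIV_ident], of "n - k"] by simp
  have "Bernstein (Suc n) (Suc k) = (\<lambda>y. c * (y ^ Suc k * (1 - y) ^ (n - k)))"
    by (rule ext) (simp add: Bernstein_def c_def mult.assoc del: binomial_Suc_Suc)
  then have "(Bernstein (Suc n) (Suc k) has_real_derivative
      (real (Suc k) * c) * (y ^ k * (1 - y) ^ (n - k))
      - (real (n - k) * c) * (y ^ Suc k * (1 - y) ^ (n - Suc k))) (at y)"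
    using DERIV_cmult[OF DERIV_mult[OF pow comp], of c] by (simp add: algebra_simps)
  moreover have "real (Suc k) * c = real (Suc n) * real (n choose k)"
    using Suc_times_binomial_eq[of n k] unfolding c_def by (metis mult.commute of_nat_mult)
  moreover have "real (n - k) * c = real (Suc n) * real (n choose Suc k)"
    using binomial_absorb_comp[of "Suc n" "Suc k"] unfolding c_def
    by (metis diff_Suc_Suc diff_Suc_1 of_nat_mult)
  moreover have "real (Suc n) * real (n choose k) * (y ^ k * (1 - y) ^ (n - k))
      - real (Suc n) * real (n choose Suc k) * (y ^ Suc k * (1 - y) ^ (n - Suc k))
      = real (Suc n) * (Bernstein n k y - Bernstein n (Suc k) y)"
    by (simp add: Bernstein_def right_diff_distrib mult.assoc)
  ultimately show ?thesis
    by simp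
qed

definition binom_tail :: "nat \<Rightarrow> nat \<Rightarrow> real \<Rightarrow> real" where
  "binom_tail n m y = (\<Sum>k = m..n. Bernstein n k y)"

lemma has_real_derivative_binom_tail:
  assumes "m \<le> n"
  shows "(binom_tail (Suc n) (Suc m) has_real_derivative real (Suc n) * Bernstein n m y) (at y)"
proof -
  have tail: "binom_tail (Suc n) (Suc m) = (\<lambda>y. \<Sum>k = m..n. Bernstein (Suc n) (Suc k) y)"
    unfolding binom_tail_def sum.shift_bounds_cl_Suc_ivl ..
  have "((\<lambda>y. \<Sum>k = m..n. Bernstein (Suc n) (Suc k) y) has_real_derivative
      (\<Sum>k = m..n. real (Suc n) * (Bernstein n k y - Bernstein n (Suc k) y))) (at y)"
    by (intro DERIV_sum has_real_derivative_Bernstein_Suc)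
  moreover have "(\<Sum>k = m..n. real (Suc n) * (Bernstein n k y - Bernstein n (Suc k) y))
      = real (Suc n) * (Bernstein n m y - Bernstein n (Suc n) y)"
    using sum_Suc_diff[of m n "\<lambda>k. - Bernstein n k y"] assms
    by (simp add: sum_distrib_left[symmetric])
  moreover have "Bernstein n (Suc n) y = 0"
    by (simp add: Bernstein_def)
  ultimately show ?thesis
    unfolding tail by simp
qed

lemma sum_lower_Bernstein_add_binom_tail:
  assumes "m \<le> Suc n"
  shows "(\<Sum>k<m. Bernstein n k y) + binom_tail n m y = 1"
proof -
  have "{..n} = {..<m} \<union> {m..n}" and "{..<m} \<inter> {m..n} = {}"
    using assms by auto
  then show ?thesis
    unfolding binom_tail_def using sum_Bernstein[of n y]
    by (metis finite_atLeastAtMost finite_lessThan sum.union_disjoint)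
qed

lemma binom_tail_le_one:
  assumes "0 \<le> y" "y \<le> 1"
  shows "binom_tail n m y \<le> 1"
proof -
  have "binom_tail n m y \<le> (\<Sum>k\<le>n. Bernstein n k y)"
    unfolding binom_tail_def using assms by (intro sum_mono2 Bernstein_nonneg) auto
  then show ?thesis
    by simp
qed

lemma binom_tail_pos:
  assumes "0 < y" "y \<le> 1" "m \<le> n"
  shows "0 < binom_tail n m y"
  unfolding binom_tail_def
  using assms by (intro sum_pos2[of _ n]) (auto simp: Bernstein_def intro: Bernstein_nonneg)

lemma binom_tail_at_0: "0 < m \<Longrightarrow> binom_tail n m 0 = 0"
  unfolding binom_tail_def Bernstein_def by simp

lemma binom_tail_at_1:
  assumes "m \<le> n"
  shows "binom_tail n m 1 = 1"
proof -
  have "(\<Sum>k<m. Bernstein n k 1) = 0"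
    using assms by (intro sum.neutral) (auto simp: Bernstein_def)
  then show ?thesis
    using sum_lower_Bernstein_add_binom_tail[of m n 1] assms by simp
qed

lemma sum_binomial_mult_le:
  assumes "A \<subseteq> {..n}" "0 \<le> c"
  shows "(\<Sum>k\<in>A. real (n choose k) * c) \<le> 2 ^ n * c"
proof -
  have "(\<Sum>k\<in>A. real (n choose k) * c) \<le> (\<Sum>k\<le>n. real (n choose k)) * c"
    unfolding sum_distrib_right[symmetric] using assms by (intro mult_right_mono sum_mono2) auto
  also have "\<dots> = 2 ^ n * c"
    using choose_row_sum[of n] by (metis of_nat_numeral of_nat_power of_nat_sum)
  finally show ?thesis .
qed

lemma binom_tail_le_power:
  assumes "0 \<le> y" "y \<le> 1"
  shows "binom_tail n m y \<le> 2 ^ n * y ^ m"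
proof -
  have "binom_tail n m y \<le> (\<Sum>k = m..n. real (n choose k) * y ^ m)"
    unfolding binom_tail_def Bernstein_def
  proof (intro sum_mono)
    fix k assume "k \<in> {m..n}"
    then have "y ^ k * (1 - y) ^ (n - k) \<le> y ^ m * 1"
      using assms by (intro mult_mono power_decreasing power_le_one) auto
    then show "real (n choose k) * y ^ k * (1 - y) ^ (n - k) \<le> real (n choose k) * y ^ m"
      by (simp add: mult.assoc mult_left_mono)
  qed
  also have "\<dots> \<le> 2 ^ n * y ^ m"
    using assms by (intro sum_binomial_mult_le) auto
  finally show ?thesis .
qed

lemma sum_lower_Bernstein_le:
  assumes "1 - y \<le> y" "y \<le> 1" "l \<le> n"
  shows "(\<Sum>k\<le>l. Bernstein n k y) \<le> 2 ^ n * (y ^ l * (1 - y) ^ (n - l))"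
proof -
  have "(\<Sum>k\<le>l. Bernstein n k y) \<le> (\<Sum>k\<le>l. real (n choose k) * (y ^ l * (1 - y) ^ (n - l)))"
    unfolding Bernstein_def
  proof (intro sum_mono)
    fix k assume "k \<in> {..l}"
    then have k: "k \<le> l" by simp
    have "(1 - y) ^ (l - k) \<le> y ^ (l - k)"
      using assms by (intro power_mono) auto
    then have "y ^ k * ((1 - y) ^ (l - k) * (1 - y) ^ (n - l)) \<le> y ^ k * (y ^ (l - k) * (1 - y) ^ (n - l))"
      using assms by (intro mult_left_mono mult_right_mono) auto
    moreover have "(1 - y) ^ (n - k) = (1 - y) ^ (l - k) * (1 - y) ^ (n - l)"
      using k assms(3) by (simp flip: power_add)
    moreover have "y ^ l = y ^ k * y ^ (l - k)"
      using k by (simp flip: power_add)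
    ultimately have "y ^ k * (1 - y) ^ (n - k) \<le> y ^ l * (1 - y) ^ (n - l)"
      by (simp only: mult.assoc)
    then show "real (n choose k) * y ^ k * (1 - y) ^ (n - k) \<le> real (n choose k) * (y ^ l * (1 - y) ^ (n - l))"
      by (simp add: mult.assoc mult_left_mono)
  qed
  also have "\<dots> \<le> 2 ^ n * (y ^ l * (1 - y) ^ (n - l))"
    using assms by (intro sum_binomial_mult_le) auto
  finally show ?thesis .
qed

lemma valley_min_less:
  fixes h :: "real \<Rightarrow> real"
  assumes dec: "strict_antimono_on {a<..c} h" and inc: "strict_mono_on {c..b} h"
    and y: "y \<in> {a<..b}" "y \<noteq> c"
  shows "h c < h y"
proof (cases "y < c")
  case True
  then show ?thesis
    using y by (intro monotone_onD[OF dec]) auto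
next
  case False
  then show ?thesis
    using y by (intro strict_mono_onD[OF inc]) auto
qed

lemma card_level_set_valley:
  fixes h :: "real \<Rightarrow> real"
  assumes cont: "continuous_on {a<..b} h"
    and dec: "strict_antimono_on {a<..c} h" and inc: "strict_mono_on {c..b} h"
    and "a < s" "s \<le> c" "c \<le> b" and t: "h c < t" "t \<le> h s" "t \<le> h b"
  shows "card {y \<in> {a<..b}. h y = t} = 2"
proof -
  have "continuous_on {s..c} h" "continuous_on {c..b} h"
    using assms by (auto intro: continuous_on_subset[OF cont])
  then obtain y1 y2 where y1: "s \<le> y1" "y1 \<le> c" "h y1 = t" and y2: "c \<le> y2" "y2 \<le> b" "h y2 = t"
    using IVT2'[of h c t s] IVT'[of h c t b] assms by auto
  have "y1 < c" "c < y2"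
    using y1 y2 t by (auto simp: order.order_iff_strict)
  have "y = y1 \<or> y = y2" if "y \<in> {a<..b}" "h y = t" for y
  proof (cases "y < c")
    case True
    have "inj_on h {a<..c}"
      using dec strict_antimono_iff_antimono by blast
    then show ?thesis
      using True that y1 \<open>a < s\<close> \<open>y1 < c\<close> by (auto dest: inj_onD)
  next
    case False
    then show ?thesis
      using that y2 t strict_mono_on_eqD[OF inc, of y y2] by fastforce
  qed
  then have "{y \<in> {a<..b}. h y = t} = {y1, y2}"
    using y1 y2 \<open>a < s\<close> \<open>y1 < c\<close> \<open>c < y2\<close> by auto
  then show ?thesis
    using \<open>y1 < c\<close> \<open>c < y2\<close> by simp
qed

definition majority :: "nat \<Rightarrow> real \<Rightarrow> real" where
  "majority m = binom_tail (2 * m + 1) (Suc m)"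

lemma F_eq_majority: "F p (2 * m + 1) x = majority m ((1 - p) * x)"
proof -
  have "{i. Suc (2 * m + 1) div 2 \<le> i \<and> i \<le> 2 * m + 1} = {Suc m..2 * m + 1}"
    by auto
  then show ?thesis
    unfolding F_def majority_def binom_tail_def Bernstein_def by simp
qed

lemma majority_pos: "0 < y \<Longrightarrow> y \<le> 1 \<Longrightarrow> 0 < majority m y"
  unfolding majority_def by (rule binom_tail_pos) auto

lemma majority_le_one: "0 \<le> y \<Longrightarrow> y \<le> 1 \<Longrightarrow> majority m y \<le> 1"
  unfolding majority_def by (rule binom_tail_le_one)

lemma majority_at_0 [simp]: "majority m 0 = 0"
  unfolding majority_def by (simp add: binom_tail_at_0)

lemma majority_at_1 [simp]: "majority m 1 = 1"
  unfolding majority_def by (simp add: binom_tail_at_1)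

lemma one_minus_majority_le:
  assumes "1/2 \<le> y" "y \<le> 1"
  shows "1 - majority m y \<le> 2 * (4 * y * (1 - y)) ^ m"
proof -
  have "1 - majority m y = (\<Sum>k\<le>m. Bernstein (2 * m + 1) k y)"
    using sum_lower_Bernstein_add_binom_tail[of "Suc m" "2 * m + 1" y]
    unfolding majority_def lessThan_Suc_atMost by simp
  also have "\<dots> \<le> 2 ^ (2 * m + 1) * (y ^ m * (1 - y) ^ (m + 1))"
    using sum_lower_Bernstein_le[of y m "2 * m + 1"] assms by simp
  also have "\<dots> = 2 * (4 * y * (1 - y)) ^ m * (1 - y)"
    by (simp add: power_add power_mult power_mult_distrib)
  also have "\<dots> \<le> 2 * (4 * y * (1 - y)) ^ m"
    using assms by (intro mult_left_le) auto
  finally show ?thesis .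
qed

definition majority_deriv :: "nat \<Rightarrow> real \<Rightarrow> real" where
  "majority_deriv m y = real (2 * m + 1) * real (2 * m choose m) * (y * (1 - y)) ^ m"

lemma has_real_derivative_majority: "(majority m has_real_derivative majority_deriv m y) (at y)"
proof -
  have "Bernstein (2 * m) m y = real (2 * m choose m) * (y * (1 - y)) ^ m"
    by (simp add: Bernstein_def power_mult_distrib mult_2)
  then show ?thesis
    using has_real_derivative_binom_tail[of m "2 * m" y]
    unfolding majority_def majority_deriv_def by (simp add: mult.assoc)
qed

lemma has_real_derivative_majority_deriv:
  "(majority_deriv m has_real_derivative
     real (2 * m + 1) * real (2 * m choose m) * real m * (y * (1 - y)) ^ (m - 1) * (1 - 2 * y)) (at y)"
proof -
  have "((\<lambda>y. y * (1 - y)) has_real_derivative 1 - 2 * y) (at y)"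
    by (auto intro!: derivative_eq_intros)
  from DERIV_cmult[OF DERIV_power[OF this, of m], of "real (2 * m + 1) * real (2 * m choose m)"]
  show ?thesis
    unfolding majority_deriv_def[abs_def] by (simp add: mult_ac)
qed

definition tangent_intercept :: "nat \<Rightarrow> real \<Rightarrow> real" where
  "tangent_intercept m y = majority m y - y * majority_deriv m y"

lemma has_real_derivative_tangent_intercept:
  "(tangent_intercept m has_real_derivative
     real (2 * m + 1) * real (2 * m choose m) * real m * y * (y * (1 - y)) ^ (m - 1) * (2 * y - 1)) (at y)"
proof -
  have "(tangent_intercept m has_real_derivative
      majority_deriv m y - (majority_deriv m y + y *
        (real (2 * m + 1) * real (2 * m choose m) * real m * (y * (1 - y)) ^ (m - 1) * (1 - 2 * y)))) (at y)"
    unfolding tangent_intercept_def[abs_def]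
    using DERIV_diff[OF has_real_derivative_majority[of m y]
        DERIV_mult[OF DERIV_ident has_real_derivative_majority_deriv[of m y]]]
    by (simp add: mult_ac)
  then show ?thesis
    by (simp add: algebra_simps)
qed

lemma tangent_intercept_at_0 [simp]: "tangent_intercept m 0 = 0"
  unfolding tangent_intercept_def by simp

lemma tangent_intercept_at_1: "0 < m \<Longrightarrow> tangent_intercept m 1 = 1"
  unfolding tangent_intercept_def majority_deriv_def by simp

lemma continuous_on_tangent_intercept: "continuous_on S (tangent_intercept m)"
  using DERIV_isCont[OF has_real_derivative_tangent_intercept]
  by (simp add: continuous_at_imp_continuous_on)

lemma tangent_intercept_deriv_sgn:
  assumes "0 < m" "0 < y" "y < 1"
  obtains d where "(tangent_intercept m has_real_derivative d) (at y)" "sgn d = sgn (2 * y - 1)"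
proof -
  define P where "P = real (2 * m + 1) * real (2 * m choose m) * real m * y * (y * (1 - y)) ^ (m - 1)"
  have "0 < P"
    using assms by (simp add: P_def zero_less_binomial)
  then have "sgn (P * (2 * y - 1)) = sgn (2 * y - 1)"
    by (simp add: sgn_mult)
  then show ?thesis
    using that has_real_derivative_tangent_intercept[of m y] unfolding P_def by blast
qed

lemma tangent_intercept_neg:
  assumes "0 < m" "0 < y" "y \<le> 1/2"
  shows "tangent_intercept m y < 0"
proof -
  have "tangent_intercept m y < tangent_intercept m 0"
  proof (rule DERIV_neg_imp_decreasing_open[OF \<open>0 < y\<close> _ continuous_on_tangent_intercept])
    fix x :: real assume "0 < x" "x < y"
    then obtain d where "(tangent_intercept m has_real_derivative d) (at x)" "sgn d = sgn (2 * x - 1)"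
      using tangent_intercept_deriv_sgn[of m x] assms by auto
    moreover have "sgn (2 * x - 1) < 0"
      using \<open>x < y\<close> assms by simp
    ultimately show "\<exists>d. (tangent_intercept m has_real_derivative d) (at x) \<and> d < 0"
      by (metis sgn_less)
  qed
  then show ?thesis
    by simp
qed

lemma strict_mono_on_tangent_intercept:
  assumes "0 < m"
  shows "strict_mono_on {1/2..1} (tangent_intercept m)"
proof (rule strict_mono_onI)
  fix a b :: real assume "a \<in> {1/2..1}" "b \<in> {1/2..1}" "a < b"
  then show "tangent_intercept m a < tangent_intercept m b"
  proof (intro DERIV_pos_imp_increasing_open[OF \<open>a < b\<close> _ continuous_on_tangent_intercept])
    fix x :: real assume "a < x" "x < b"
    then obtain d where "(tangent_intercept m has_real_derivative d) (at x)" "sgn d = sgn (2 * x - 1)"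
      using tangent_intercept_deriv_sgn[of m x] assms \<open>a \<in> {1/2..1}\<close> \<open>b \<in> {1/2..1}\<close> by auto
    moreover have "0 < sgn (2 * x - 1)"
      using \<open>a < x\<close> \<open>a \<in> {1/2..1}\<close> by simp
    ultimately show "\<exists>d. (tangent_intercept m has_real_derivative d) (at x) \<and> 0 < d"
      by (metis sgn_greater)
  qed
qed

lemma tangent_intercept_sign_change:
  assumes "0 < m"
  shows "\<exists>c. 1/2 < c \<and> c < 1 \<and> (\<forall>y. 0 < y \<and> y < c \<longrightarrow> tangent_intercept m y < 0)
    \<and> (\<forall>y. c < y \<and> y \<le> 1 \<longrightarrow> 0 < tangent_intercept m y)"
proof -
  have half: "tangent_intercept m (1/2) < 0"
    using tangent_intercept_neg[OF assms] by simp
  obtain c where c: "1/2 \<le> c" "c \<le> 1" "tangent_intercept m c = 0"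
    using IVT'[of "tangent_intercept m" "1/2" 0 1] half tangent_intercept_at_1[OF assms]
      continuous_on_tangent_intercept by force
  have "c \<noteq> 1/2" "c \<noteq> 1"
    using c half tangent_intercept_at_1[OF assms] by fastforce+
  moreover have "tangent_intercept m y < 0" if "0 < y" "y < c" for y
    using that c tangent_intercept_neg[OF assms, of y]
      strict_mono_onD[OF strict_mono_on_tangent_intercept[OF assms], of y c]
    by (cases "y \<le> 1/2") auto
  moreover have "0 < tangent_intercept m y" if "c < y" "y \<le> 1" for y
    using that c strict_mono_onD[OF strict_mono_on_tangent_intercept[OF assms], of c y] by auto
  ultimately show ?thesis
    using c by (intro exI[of _ c]) auto
qed

(* For m = 0 the majority is the identity and this choice is arbitrary. *)
definition ratio_argmin :: "nat \<Rightarrow> real" where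
  "ratio_argmin m = (SOME c. 1/2 < c \<and> c < 1
     \<and> (\<forall>y. 0 < y \<and> y < c \<longrightarrow> tangent_intercept m y < 0)
     \<and> (\<forall>y. c < y \<and> y \<le> 1 \<longrightarrow> 0 < tangent_intercept m y))"

lemma ratio_argmin:
  assumes "0 < m"
  shows "1/2 < ratio_argmin m" "ratio_argmin m < 1"
    and "\<And>y. 0 < y \<Longrightarrow> y < ratio_argmin m \<Longrightarrow> tangent_intercept m y < 0"
    and "\<And>y. ratio_argmin m < y \<Longrightarrow> y \<le> 1 \<Longrightarrow> 0 < tangent_intercept m y"
  using someI_ex[OF tangent_intercept_sign_change[OF assms]]
  unfolding ratio_argmin_def[symmetric] by auto

definition majority_ratio :: "nat \<Rightarrow> real \<Rightarrow> real" where
  "majority_ratio m y = y / majority m y"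

lemma has_real_derivative_majority_ratio:
  assumes "majority m y \<noteq> 0"
  shows "(majority_ratio m has_real_derivative tangent_intercept m y / (majority m y)\<^sup>2) (at y)"
  using DERIV_divide[OF DERIV_ident has_real_derivative_majority assms]
  unfolding majority_ratio_def[abs_def] tangent_intercept_def
  by (simp add: power2_eq_square)

lemma continuous_on_majority_ratio: "continuous_on {0<..1} (majority_ratio m)"
proof (intro continuous_at_imp_continuous_on ballI)
  fix y :: real assume "y \<in> {0<..1}"
  then have "majority m y \<noteq> 0"
    using majority_pos[of y m] by simp
  then show "isCont (majority_ratio m) y"
    by (rule DERIV_isCont[OF has_real_derivative_majority_ratio])
qed

lemma majority_ratio_ge: "0 < y \<Longrightarrow> y \<le> 1 \<Longrightarrow> y \<le> majority_ratio m y"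
  unfolding majority_ratio_def
  using majority_pos[of y m] majority_le_one[of y m] by (simp add: le_divide_eq)

lemma majority_ratio_at_1 [simp]: "majority_ratio m 1 = 1"
  unfolding majority_ratio_def by simp

lemma majority_ratio_at_small:
  assumes "0 < m"
  shows "1 \<le> majority_ratio m (1 / 2 ^ (2 * m + 1))"
proof -
  define y :: real where "y = 1 / 2 ^ (2 * m + 1)"
  have y: "0 < y" "y \<le> 1"
    unfolding y_def using one_le_power[of "2 :: real" "2 * m + 1"] by simp_all
  have "majority m y \<le> 2 ^ (2 * m + 1) * y ^ Suc m"
    unfolding majority_def using y by (intro binom_tail_le_power) auto
  also have "\<dots> = y ^ m"
    unfolding y_def by (simp add: field_simps)
  also have "\<dots> \<le> y ^ 1"
    using y assms by (intro power_decreasing) auto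
  finally show ?thesis
    using majority_pos[OF y] unfolding majority_ratio_def y_def[symmetric] by simp
qed

lemma strict_antimono_on_majority_ratio:
  assumes "0 < m"
  shows "strict_antimono_on {0<..ratio_argmin m} (majority_ratio m)"
proof (rule monotone_onI)
  fix a b assume ab: "a \<in> {0<..ratio_argmin m}" "b \<in> {0<..ratio_argmin m}" "a < b"
  have sub: "{a..b} \<subseteq> {0<..1}"
    using ab ratio_argmin(2)[OF assms] by auto
  show "majority_ratio m b < majority_ratio m a"
  proof (rule DERIV_neg_imp_decreasing_open[OF \<open>a < b\<close>])
    fix x :: real assume "a < x" "x < b"
    then have "0 < majority m x" "tangent_intercept m x / (majority m x)\<^sup>2 < 0"
      using sub ab ratio_argmin[OF assms] majority_pos[of x m] by (auto intro: divide_neg_pos)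
    then show "\<exists>d. (majority_ratio m has_real_derivative d) (at x) \<and> d < 0"
      using has_real_derivative_majority_ratio[of m x] by auto
  qed (use sub continuous_on_subset[OF continuous_on_majority_ratio] in blast)
qed

lemma strict_mono_on_majority_ratio:
  assumes "0 < m"
  shows "strict_mono_on {ratio_argmin m..1} (majority_ratio m)"
proof (rule strict_mono_onI)
  fix a b assume ab: "a \<in> {ratio_argmin m..1}" "b \<in> {ratio_argmin m..1}" "a < b"
  have sub: "{a..b} \<subseteq> {0<..1}"
    using ab ratio_argmin(1)[OF assms] by auto
  show "majority_ratio m a < majority_ratio m b"
  proof (rule DERIV_pos_imp_increasing_open[OF \<open>a < b\<close>])
    fix x :: real assume "a < x" "x < b"
    then have "0 < majority m x" "0 < tangent_intercept m x"
      using sub ab ratio_argmin[OF assms] majority_pos[of x m] by auto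
    then show "\<exists>d. (majority_ratio m has_real_derivative d) (at x) \<and> 0 < d"
      using has_real_derivative_majority_ratio[of m x] by auto
  qed (use sub continuous_on_subset[OF continuous_on_majority_ratio] in blast)
qed

definition ratio_min :: "nat \<Rightarrow> real" where
  "ratio_min m = majority_ratio m (ratio_argmin m)"

lemma ratio_min_less:
  assumes "0 < m" "y \<in> {0<..1}" "y \<noteq> ratio_argmin m"
  shows "ratio_min m < majority_ratio m y"
  unfolding ratio_min_def
  using valley_min_less[OF strict_antimono_on_majority_ratio strict_mono_on_majority_ratio] assms
  by blast

lemma ratio_min_le: "0 < m \<Longrightarrow> y \<in> {0<..1} \<Longrightarrow> ratio_min m \<le> majority_ratio m y"
  using ratio_min_less[of m y] by (cases "y = ratio_argmin m") (auto simp: ratio_min_def)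

lemma ratio_min_gt_half: "0 < m \<Longrightarrow> 1/2 < ratio_min m"
  using majority_ratio_ge[of "ratio_argmin m" m] ratio_argmin(1,2)[of m]
  unfolding ratio_min_def by auto

lemma ratio_min_less_one: "0 < m \<Longrightarrow> ratio_min m < 1"
  using ratio_min_less[of m 1] ratio_argmin(2)[of m] by simp

definition ratio_level :: "nat \<Rightarrow> real \<Rightarrow> real set" where
  "ratio_level m t = {y \<in> {0<..1}. majority_ratio m y = t}"

lemma card_ratio_level:
  assumes "0 < m" "ratio_min m < t" "t \<le> 1"
  shows "card (ratio_level m t) = 2"
  unfolding ratio_level_def
proof (rule card_level_set_valley[OF continuous_on_majority_ratio
      strict_antimono_on_majority_ratio[OF \<open>0 < m\<close>] strict_mono_on_majority_ratio[OF \<open>0 < m\<close>]])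
  have "(1 :: real) / 2 ^ (2 * m + 1) \<le> 1 / 2"
    by (intro divide_left_mono) auto
  then show "1 / 2 ^ (2 * m + 1) \<le> ratio_argmin m"
    using ratio_argmin(1)[OF \<open>0 < m\<close>] by linarith
  show "t \<le> majority_ratio m (1 / 2 ^ (2 * m + 1))"
    using majority_ratio_at_small[OF \<open>0 < m\<close>] \<open>t \<le> 1\<close> by linarith
qed (use assms ratio_argmin(2)[OF \<open>0 < m\<close>] in \<open>auto simp: ratio_min_def\<close>)

lemma ratio_level_min: "0 < m \<Longrightarrow> ratio_level m (ratio_min m) = {ratio_argmin m}"
  unfolding ratio_level_def
  using ratio_min_less[of m] ratio_argmin(1,2)[of m] by (force simp: ratio_min_def)

lemma ratio_level_below_min: "0 < m \<Longrightarrow> t < ratio_min m \<Longrightarrow> ratio_level m t = {}"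
  unfolding ratio_level_def using ratio_min_le[of m] by force

lemma fixpts_majority:
  assumes "0 \<le> q" "q < 1"
  shows "fixpts q (2 * m + 1) = insert 0 ((\<lambda>y. y / (1 - q)) ` ratio_level m (1 - q))"
proof (intro equalityI subsetI)
  fix x assume "x \<in> fixpts q (2 * m + 1)"
  then have x: "0 \<le> x" "x \<le> 1" "majority m ((1 - q) * x) = x"
    unfolding fixpts_def F_eq_majority by auto
  show "x \<in> insert 0 ((\<lambda>y. y / (1 - q)) ` ratio_level m (1 - q))"
  proof (cases "x = 0")
    case False
    then have "(1 - q) * x \<in> ratio_level m (1 - q)"
      using x assms by (auto simp: ratio_level_def majority_ratio_def mult_le_one)
    moreover have "x = (1 - q) * x / (1 - q)"
      using assms by simp
    ultimately show ?thesis
      by blast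
  qed simp
next
  fix x assume "x \<in> insert 0 ((\<lambda>y. y / (1 - q)) ` ratio_level m (1 - q))"
  then consider "x = 0" | y where "x = y / (1 - q)" "y \<in> ratio_level m (1 - q)"
    by blast
  then show "x \<in> fixpts q (2 * m + 1)"
  proof cases
    case 1
    then show ?thesis
      unfolding fixpts_def F_eq_majority by simp
  next
    case 2
    then have y: "0 < y" "y \<le> 1" "y / majority m y = 1 - q"
      by (auto simp: ratio_level_def majority_ratio_def)
    have yx: "(1 - q) * x = y"
      using 2(1) assms by simp
    have "(1 - q) * majority m y = (1 - q) * x"
      using y yx majority_pos[of y m] by (simp add: divide_eq_eq)
    then have "majority m y = x"
      using assms by simp
    with yx show ?thesis
      using y majority_pos[of y m] majority_le_one[of y m]
      unfolding fixpts_def F_eq_majority by simp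
  qed
qed

lemma card_fixpts_majority:
  assumes "0 \<le> q" "q < 1" "finite (ratio_level m (1 - q))"
  shows "finite (fixpts q (2 * m + 1))"
    and "card (fixpts q (2 * m + 1)) = Suc (card (ratio_level m (1 - q)))"
proof -
  have "inj_on (\<lambda>y. y / (1 - q)) (ratio_level m (1 - q))"
    using assms by (intro inj_onI) simp
  moreover have "0 \<notin> (\<lambda>y. y / (1 - q)) ` ratio_level m (1 - q)"
    using assms by (auto simp: ratio_level_def)
  ultimately show "finite (fixpts q (2 * m + 1))"
    and "card (fixpts q (2 * m + 1)) = Suc (card (ratio_level m (1 - q)))"
    using assms unfolding fixpts_majority[OF assms(1,2)] by (simp_all add: card_image)
qed

lemma card_fixpts_below_threshold:
  assumes "0 < m" "0 \<le> q" "q < 1 - ratio_min m"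
  shows "finite (fixpts q (2 * m + 1)) \<and> card (fixpts q (2 * m + 1)) = 3"
proof -
  have "card (ratio_level m (1 - q)) = 2"
    using assms ratio_min_less_one[OF \<open>0 < m\<close>] by (intro card_ratio_level) auto
  then show ?thesis
    using assms ratio_min_gt_half[OF \<open>0 < m\<close>] card_fixpts_majority[of q m]
    by (simp add: card_ge_0_finite)
qed

lemma card_fixpts_at_threshold:
  assumes "0 < m"
  shows "finite (fixpts (1 - ratio_min m) (2 * m + 1)) \<and> card (fixpts (1 - ratio_min m) (2 * m + 1)) = 2"
  using card_fixpts_majority[of "1 - ratio_min m" m] ratio_level_min[OF assms]
    ratio_min_gt_half[OF assms] ratio_min_less_one[OF assms] by simp

lemma fixpts_above_threshold:
  assumes "0 < m" "1 - ratio_min m < q" "q \<le> 1"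
  shows "fixpts q (2 * m + 1) = {0}"
proof (cases "q = 1")
  case True
  then show ?thesis
    unfolding fixpts_def F_eq_majority by auto
next
  case False
  then show ?thesis
    using assms fixpts_majority[of q m] ratio_level_below_min[OF \<open>0 < m\<close>, of "1 - q"]
      ratio_min_less_one[OF \<open>0 < m\<close>] by simp
qed

lemma pstar_eq_one_minus_ratio_min:
  assumes "0 < m" "ratio_min m \<le> 8/9"
  shows "pstar (2 * m + 1) = 1 - ratio_min m"
proof -
  let ?k = "2 * m + 1" and ?p = "1 - ratio_min m"
  have range: "1/9 \<le> ?p" "?p < 1/2" "0 \<le> ?p" "?p \<le> 1"
    using assms(2) ratio_min_gt_half[OF \<open>0 < m\<close>] ratio_min_less_one[OF \<open>0 < m\<close>] by auto
  note below = card_fixpts_below_threshold[OF \<open>0 < m\<close>]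
    and at = card_fixpts_at_threshold[OF \<open>0 < m\<close>]
    and above = fixpts_above_threshold[OF \<open>0 < m\<close>]
  show ?thesis
    unfolding pstar_def
  proof (rule the_equality)
    show "1/9 \<le> ?p \<and> ?p < 1/2 \<and> (\<forall>q. 0 \<le> q \<and> q < ?p \<longrightarrow> finite (fixpts q ?k) \<and> card (fixpts q ?k) = 3)
      \<and> finite (fixpts ?p ?k) \<and> card (fixpts ?p ?k) = 2 \<and> (\<forall>q. ?p < q \<and> q \<le> 1 \<longrightarrow> fixpts q ?k = {0})"
      using range below at above by blast
  next
    fix p assume p: "1/9 \<le> p \<and> p < 1/2
      \<and> (\<forall>q. 0 \<le> q \<and> q < p \<longrightarrow> finite (fixpts q ?k) \<and> card (fixpts q ?k) = 3)
      \<and> finite (fixpts p ?k) \<and> card (fixpts p ?k) = 2 \<and> (\<forall>q. p < q \<and> q \<le> 1 \<longrightarrow> fixpts q ?k = {0})"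
    show "p = ?p"
    proof (rule ccontr)
      assume "p \<noteq> ?p"
      then consider "p < ?p" | "?p < p"
        by linarith
      then show False
      proof cases
        case 1
        then have "fixpts ?p ?k = {0}"
          using p range by blast
        then show False
          using at by simp
      next
        case 2
        then have "card (fixpts ?p ?k) = 3"
          using p range by blast
        then show False
          using at by simp
      qed
    qed
  qed
qed

lemma majority_tendsto_one:
  assumes "1/2 < y" "y \<le> 1"
  shows "(\<lambda>m. majority m y) \<longlonglongrightarrow> 1"
proof (rule tendsto_sandwich)
  define r where "r = 4 * y * (1 - y)"
  have "0 < (2 * y - 1)\<^sup>2"
    using assms by simp
  then have "0 \<le> r" "r < 1"
    using assms unfolding r_def by (auto simp: power2_eq_square algebra_simps)
  then have "(\<lambda>m. 1 - 2 * r ^ m) \<longlonglongrightarrow> 1 - 2 * 0"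
    by (intro tendsto_intros LIMSEQ_power_zero) auto
  then show "(\<lambda>m. 1 - 2 * r ^ m) \<longlonglongrightarrow> 1"
    by simp
  show "eventually (\<lambda>m. 1 - 2 * r ^ m \<le> majority m y) sequentially"
    using one_minus_majority_le[of y] assms unfolding r_def
    by (intro always_eventually allI) (smt (verit))
  show "eventually (\<lambda>m. majority m y \<le> 1) sequentially"
    using majority_le_one[of y] assms by (intro always_eventually allI) simp
qed simp

lemma ratio_min_tendsto: "ratio_min \<longlonglongrightarrow> 1/2"
proof (rule order_tendstoI)
  fix a :: real
  assume "a < 1/2"
  show "eventually (\<lambda>m. a < ratio_min m) sequentially"
    using eventually_gt_at_top[of 0]
  proof eventually_elim
    case (elim m)
    then show ?case
      using ratio_min_gt_half[of m] \<open>a < 1/2\<close> by linarith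
  qed
next
  fix a :: real
  assume "1/2 < a"
  define y where "y = (1/2 + min a 1) / 2"
  have y: "1/2 < y" "y \<le> 1" "y < a"
    using \<open>1/2 < a\<close> unfolding y_def by auto
  have "(\<lambda>m. majority_ratio m y) \<longlonglongrightarrow> y / 1"
    unfolding majority_ratio_def by (intro tendsto_divide tendsto_const majority_tendsto_one y) simp
  then have "eventually (\<lambda>m. majority_ratio m y < a) sequentially"
    using y by (intro order_tendstoD(2)) auto
  then show "eventually (\<lambda>m. ratio_min m < a) sequentially"
    using eventually_gt_at_top[of 0]
  proof eventually_elim
    case (elim m)
    moreover have "ratio_min m \<le> majority_ratio m y"
      using ratio_min_le[of m y] elim y by simp
    ultimately show ?case
      by linarith
  qed
qed

theorem lemmaA9:
  shows "(\<lambda>j. pstar (2 * j + 3)) \<longlonglongrightarrow> 1 / 2"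
proof -
  have lim: "(\<lambda>j. ratio_min (Suc j)) \<longlonglongrightarrow> 1/2"
    using LIMSEQ_Suc[OF ratio_min_tendsto] .
  then have "eventually (\<lambda>j. ratio_min (Suc j) < 8/9) sequentially"
    by (rule order_tendstoD) simp
  moreover have "pstar (2 * j + 3) = 1 - ratio_min (Suc j)" if "ratio_min (Suc j) < 8/9" for j
    using pstar_eq_one_minus_ratio_min[of "Suc j"] that by (simp add: eval_nat_numeral)
  ultimately have "eventually (\<lambda>j. 1 - ratio_min (Suc j) = pstar (2 * j + 3)) sequentially"
    by (simp add: eventually_mono)
  moreover have "(\<lambda>j. 1 - ratio_min (Suc j)) \<longlonglongrightarrow> 1 - 1/2"
    by (intro tendsto_diff tendsto_const lim)
  ultimately show ?thesis
    by (simp add: tendsto_cong)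
qed

end
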